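(* Let $(Q,Z)$ be a locally gentle pair and let $v$ be a relational vertex of $Q$. Let $(Q^{v},Z^{v})$ be the levee of $(Q,Z)$ at $v$, with new vertices $v(\sharp),v(\flat)$. Then: (i) the pair $(Q^{v},Z^{v})$ is locally gentle; (ii) for the pair $(Q^{v},Z^{v})$, the vertices $v(\sharp)$ and $v(\flat)$ are not relational.
   Context: A quiver $Q$ has vertex set $Q_0$, arrow set $Q_1$, head and tail maps $h,t\colon Q_1\to Q_0$ (so $a\colon t(a)\to h(a)$). A non-trivial path is $a_1\cdots a_n$ with $t(a_i)=h(a_{i+1})$. $Z$ is a set of paths of length $2$ ("zero-relations"); a path is admissible if no element of $Z$ occurs as a subpath of it. The pair $(Q,Z)$ is locally gentle if (i) every vertex is the head of at most two arrows and the tail of at most two arrows, and (ii) for every arrow $b$ there is at most one admissible and at most one inadmissible length-$2$ path of the form $cb$, and likewise at most one admissible and at most one inadmissible length-$2$ path of the form $ba$. A vertex $v$ is relational if there is $ba\in Z$ with $t(b)=v=h(a)$. For a relational vertex $v$: let $b,a$ be arrows with $t(b)=v=h(a)$, $ba\in Z$; let $c$ be the other arrow with head $v$ (if it exists) and $d$ the other arrow with tail $v$ (if it exists); by local gentleness $bc\notin Z$, $da\notin Z$ and $dc\in Z$ whenever both $c,d$ exist. The levee $(Q^{v},Z^{v})$: vertices are $u^{v}$ for $u\in Q_0\setminus\{v\}$ together with two new distinct vertices $v(\sharp),v(\flat)$; arrows are $a'^{v}$ for $a'\in Q_1$. For an arrow $x$, $h^{v}(x^{v})=h(x)^{v}$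 if $h(x)\neq v$ and $t^{v}(x^{v})=t(x)^{v}$ if $t(x)\neq v$; otherwise $t^{v}(b^{v})=v(\sharp)=h^{v}(c^{v})$ and $t^{v}(d^{v})=v(\flat)=h^{v}(a^{v})$ (whenever these arrows exist; head and tail of a loop are assigned separately by these rules). The quiver $Q^v$ is defined up to isomorphism (swapping the roles of the labels). Finally $Z^{v}=\{m^{v}n^{v}: mn\in Z,\ t(m)\neq v\}$. *)

theory Defs
  imports Main
begin

text \<open>A quiver is given by a vertex set Q0, an arrow set Q1, and head/tail maps
  h, t (an arrow x goes from t x to h x). A length-2 path "b a" (b after a) is
  represented by the pair (b, a) with t b = h a.\<close>

definition is_path2 :: "'a set \<Rightarrow> ('a \<Rightarrow> 'v) \<Rightarrow> ('a \<Rightarrow> 'v) \<Rightarrow> 'a \<Rightarrow> 'a \<Rightarrow> bool" where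
  "is_path2 Q1 h t b a \<longleftrightarrow> b \<in> Q1 \<and> a \<in> Q1 \<and> t b = h a"

definition locally_gentle ::
  "'v set \<Rightarrow> 'a set \<Rightarrow> ('a \<Rightarrow> 'v) \<Rightarrow> ('a \<Rightarrow> 'v) \<Rightarrow> ('a \<times> 'a) set \<Rightarrow> bool" where
  "locally_gentle Q0 Q1 h t Z \<longleftrightarrow>
     (\<forall>x\<in>Q1. h x \<in> Q0 \<and> t x \<in> Q0) \<and>
     (\<forall>(b, a)\<in>Z. is_path2 Q1 h t b a) \<and>
     (\<forall>u\<in>Q0. finite {x\<in>Q1. h x = u} \<and> card {x\<in>Q1. h x = u} \<le> 2 \<and>
              finite {x\<in>Q1. t x = u} \<and> card {x\<in>Q1. t x = u} \<le> 2) \<and>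
     (\<forall>b\<in>Q1.
        (\<forall>c c'. is_path2 Q1 h t c b \<and> (c, b) \<notin> Z \<and> is_path2 Q1 h t c' b \<and> (c', b) \<notin> Z \<longrightarrow> c = c') \<and>
        (\<forall>c c'. (c, b) \<in> Z \<and> (c', b) \<in> Z \<longrightarrow> c = c') \<and>
        (\<forall>a a'. is_path2 Q1 h t b a \<and> (b, a) \<notin> Z \<and> is_path2 Q1 h t b a' \<and> (b, a') \<notin> Z \<longrightarrow> a = a') \<and>
        (\<forall>a a'. (b, a) \<in> Z \<and> (b, a') \<in> Z \<longrightarrow> a = a'))"

definition relational ::
  "'v set \<Rightarrow> 'a set \<Rightarrow> ('a \<Rightarrow> 'v) \<Rightarrow> ('a \<Rightarrow> 'v) \<Rightarrow> ('a \<times> 'a) set \<Rightarrow> 'v \<Rightarrow> bool" where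
  "relational Q0 Q1 h t Z v \<longleftrightarrow> v \<in> Q0 \<and> (\<exists>b a. (b, a) \<in> Z \<and> t b = v \<and> h a = v)"

text \<open>Vertices of the levee: old vertices u^v, plus the two new vertices v(sharp), v(flat).
  Arrows of the levee are identified with the arrows of Q (x^v is represented by x).\<close>

datatype 'v levee_vertex = Old 'v | Sharp | Flat

text \<open>The levee at v, relative to a chosen pair b a in Z with t b = v = h a.
  c is the other arrow with head v, d the other arrow with tail v.\<close>

definition levee_Q0 :: "'v set \<Rightarrow> 'v \<Rightarrow> 'v levee_vertex set" where
  "levee_Q0 Q0 v = Old ` (Q0 - {v}) \<union> {Sharp, Flat}"

definition levee_h :: "('a \<Rightarrow> 'v) \<Rightarrow> 'v \<Rightarrow> 'a \<Rightarrow> 'a \<Rightarrow> 'v levee_vertex" where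
  "levee_h h v a x = (if h x \<noteq> v then Old (h x) else if x = a then Flat else Sharp)"

definition levee_t :: "('a \<Rightarrow> 'v) \<Rightarrow> 'v \<Rightarrow> 'a \<Rightarrow> 'a \<Rightarrow> 'v levee_vertex" where
  "levee_t t v b x = (if t x \<noteq> v then Old (t x) else if x = b then Sharp else Flat)"

definition levee_Z :: "('a \<times> 'a) set \<Rightarrow> ('a \<Rightarrow> 'v) \<Rightarrow> 'v \<Rightarrow> ('a \<times> 'a) set" where
  "levee_Z Z t v = {(m, n) \<in> Z. t m \<noteq> v}"

end

theory Submission
  imports Defs
begin

text \<open>The levee keeps the arrows and only splits v, so every path of the levee is a path
  of Q and the degree bounds are inherited. Local gentleness at v says that b is the only
  arrow m with m a \<in> Z and a the only arrow n with b n \<in> Z. Hence a relation m n through v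
  is either b a, broken in the levee as v(\<sharp>) \<noteq> v(\<flat>), or involves neither b nor a,
  broken as v(\<flat>) \<noteq> v(\<sharp>). So the relations of the levee are exactly the relations
  of Q that are still paths, and then each uniqueness condition of local gentleness is
  inherited from Q. No relation of the levee passes through a new vertex, which gives (ii).\<close>

lemma locally_gentle_arrow_ends:
  "locally_gentle Q0 Q1 h t Z \<Longrightarrow> x \<in> Q1 \<Longrightarrow> h x \<in> Q0 \<and> t x \<in> Q0"
  unfolding locally_gentle_def by blast

lemma locally_gentle_relation_is_path2:
  "locally_gentle Q0 Q1 h t Z \<Longrightarrow> (m, n) \<in> Z \<Longrightarrow> is_path2 Q1 h t m n"
  unfolding locally_gentle_def by blast

lemma locally_gentle_fibers:
  assumes "locally_gentle Q0 Q1 h t Z" and "u \<in> Q0"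
  shows "finite {x\<in>Q1. h x = u} \<and> card {x\<in>Q1. h x = u} \<le> 2"
    and "finite {x\<in>Q1. t x = u} \<and> card {x\<in>Q1. t x = u} \<le> 2"
  using assms unfolding locally_gentle_def by blast+

lemma locally_gentle_admissible_successor_unique:
  "\<lbrakk>locally_gentle Q0 Q1 h t Z; b \<in> Q1; is_path2 Q1 h t c b; (c, b) \<notin> Z;
    is_path2 Q1 h t c' b; (c', b) \<notin> Z\<rbrakk> \<Longrightarrow> c = c'"
  unfolding locally_gentle_def by blast

lemma locally_gentle_relation_successor_unique:
  "\<lbrakk>locally_gentle Q0 Q1 h t Z; b \<in> Q1; (c, b) \<in> Z; (c', b) \<in> Z\<rbrakk> \<Longrightarrow> c = c'"
  unfolding locally_gentle_def by blast

lemma locally_gentle_admissible_predecessor_unique: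
  "\<lbrakk>locally_gentle Q0 Q1 h t Z; b \<in> Q1; is_path2 Q1 h t b a; (b, a) \<notin> Z;
    is_path2 Q1 h t b a'; (b, a') \<notin> Z\<rbrakk> \<Longrightarrow> a = a'"
  unfolding locally_gentle_def by blast

lemma locally_gentle_relation_predecessor_unique:
  "\<lbrakk>locally_gentle Q0 Q1 h t Z; b \<in> Q1; (b, a) \<in> Z; (b, a') \<in> Z\<rbrakk> \<Longrightarrow> a = a'"
  unfolding locally_gentle_def by blast

lemma finite_card_le_two_mono:
  "finite B \<and> card B \<le> 2 \<Longrightarrow> A \<subseteq> B \<Longrightarrow> finite A \<and> card A \<le> 2"
  by (meson card_mono finite_subset le_trans)

lemma locally_gentle_refinement:
  fixes \<pi> :: "'w \<Rightarrow> 'v"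
  assumes gentle: "locally_gentle Q0 Q1 h t Z"
    and quiver: "\<forall>x\<in>Q1. h' x \<in> Q0' \<and> t' x \<in> Q0'"
    and proj_vertices: "\<pi> ` Q0' \<subseteq> Q0"
    and proj_h: "\<And>x. \<pi> (h' x) = h x" and proj_t: "\<And>x. \<pi> (t' x) = t x"
    and relations: "Z' = {(m, n) \<in> Z. t' m = h' n}"
  shows "locally_gentle Q0' Q1 h' t' Z'"
proof -
  have path: "is_path2 Q1 h t m n" if "is_path2 Q1 h' t' m n" for m n
    using that proj_h proj_t unfolding is_path2_def by metis
  have admissible: "(m, n) \<notin> Z" if "is_path2 Q1 h' t' m n" "(m, n) \<notin> Z'" for m n
    using that relations by (simp add: is_path2_def)
  have relation: "(m, n) \<in> Z" if "(m, n) \<in> Z'" for m n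
    using that relations by simp
  have fibers: "finite {x\<in>Q1. h' x = u} \<and> card {x\<in>Q1. h' x = u} \<le> 2 \<and>
      finite {x\<in>Q1. t' x = u} \<and> card {x\<in>Q1. t' x = u} \<le> 2" if "u \<in> Q0'" for u
  proof -
    have "\<pi> u \<in> Q0" using proj_vertices that by blast
    moreover have "{x\<in>Q1. h' x = u} \<subseteq> {x\<in>Q1. h x = \<pi> u}"
      and "{x\<in>Q1. t' x = u} \<subseteq> {x\<in>Q1. t x = \<pi> u}"
      using proj_h proj_t by auto
    ultimately show ?thesis
      using locally_gentle_fibers[OF gentle] finite_card_le_two_mono by meson
  qed
  have "\<forall>(m, n)\<in>Z'. is_path2 Q1 h' t' m n"
    using relations locally_gentle_relation_is_path2[OF gentle] by (auto simp: is_path2_def)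
  then show ?thesis
    unfolding locally_gentle_def
    using quiver fibers
      locally_gentle_admissible_successor_unique[OF gentle, OF _ path admissible path admissible]
      locally_gentle_relation_successor_unique[OF gentle, OF _ relation relation]
      locally_gentle_admissible_predecessor_unique[OF gentle, OF _ path admissible path admissible]
      locally_gentle_relation_predecessor_unique[OF gentle, OF _ relation relation]
    by blast
qed

fun levee_proj :: "'v \<Rightarrow> 'v levee_vertex \<Rightarrow> 'v" where
  "levee_proj v (Old u) = u"
| "levee_proj v Sharp = v"
| "levee_proj v Flat = v"

lemma levee_proj_levee_h [simp]: "levee_proj v (levee_h h v a x) = h x"
  by (simp add: levee_h_def)

lemma levee_proj_levee_t [simp]: "levee_proj v (levee_t t v b x) = t x"
  by (simp add: levee_t_def)

lemma levee_proj_levee_Q0: "v \<in> Q0 \<Longrightarrow> levee_proj v ` levee_Q0 Q0 v \<subseteq> Q0"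
  by (auto simp: levee_Q0_def)

lemma levee_h_in_levee_Q0: "h x \<in> Q0 \<Longrightarrow> levee_h h v a x \<in> levee_Q0 Q0 v"
  by (simp add: levee_h_def levee_Q0_def)

lemma levee_t_in_levee_Q0: "t x \<in> Q0 \<Longrightarrow> levee_t t v b x \<in> levee_Q0 Q0 v"
  by (simp add: levee_t_def levee_Q0_def)

lemma levee_Z_eq_surviving_paths:
  assumes gentle: "locally_gentle Q0 Q1 h t Z"
    and ba: "(b, a) \<in> Z" "t b = v" "h a = v"
  shows "levee_Z Z t v = {(m, n) \<in> Z. levee_t t v b m = levee_h h v a n}"
proof -
  have heads: "t m = h n" if "(m, n) \<in> Z" for m n
    using locally_gentle_relation_is_path2[OF gentle that] by (simp add: is_path2_def)
  have "b \<in> Q1" "a \<in> Q1"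
    using locally_gentle_relation_is_path2[OF gentle ba(1)] by (simp_all add: is_path2_def)
  have unique_b: "m = b" if "(m, a) \<in> Z" for m
    using locally_gentle_relation_successor_unique[OF gentle \<open>a \<in> Q1\<close> that ba(1)] .
  have unique_a: "n = a" if "(b, n) \<in> Z" for n
    using locally_gentle_relation_predecessor_unique[OF gentle \<open>b \<in> Q1\<close> that ba(1)] .
  have survives_iff: "levee_t t v b m = levee_h h v a n \<longleftrightarrow> t m \<noteq> v" if "(m, n) \<in> Z" for m n
  proof
    assume survives: "levee_t t v b m = levee_h h v a n"
    show "t m \<noteq> v"
    proof
      assume "t m = v"
      then have "h n = v"
        using heads[OF that] by simp
      have "m = b \<longleftrightarrow> n = a"
        using unique_a unique_b that by blast
      moreover have "levee_t t v b m = (if m = b then Sharp else Flat)"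
        using \<open>t m = v\<close> by (simp add: levee_t_def)
      moreover have "levee_h h v a n = (if n = a then Flat else Sharp)"
        using \<open>h n = v\<close> by (simp add: levee_h_def)
      ultimately show False
        using survives by (simp split: if_splits)
    qed
  next
    assume "t m \<noteq> v"
    then show "levee_t t v b m = levee_h h v a n"
      using heads[OF that] by (simp add: levee_t_def levee_h_def)
  qed
  show ?thesis
    unfolding levee_Z_def using survives_iff by blast
qed

lemma levee_new_vertex_not_relational:
  "u \<notin> range Old \<Longrightarrow> \<not> relational Q0' Q1 h' (levee_t t v b) (levee_Z Z t v) u"
  by (auto simp: relational_def levee_Z_def levee_t_def)

theorem lemma2p10:
  fixes Q0 :: "'v set" and Q1 :: "'a set" and h t :: "'a \<Rightarrow> 'v"
    and Z :: "('a \<times> 'a) set" and v :: 'v and a b :: 'a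
  assumes "locally_gentle Q0 Q1 h t Z"
    and "relational Q0 Q1 h t Z v"
    and "(b, a) \<in> Z" and "t b = v" and "h a = v"
  shows "locally_gentle (levee_Q0 Q0 v) Q1 (levee_h h v a) (levee_t t v b) (levee_Z Z t v)
    \<and> \<not> relational (levee_Q0 Q0 v) Q1 (levee_h h v a) (levee_t t v b) (levee_Z Z t v) Sharp
    \<and> \<not> relational (levee_Q0 Q0 v) Q1 (levee_h h v a) (levee_t t v b) (levee_Z Z t v) Flat"
proof (intro conjI)
  have "b \<in> Q1"
    using locally_gentle_relation_is_path2[OF assms(1,3)] by (simp add: is_path2_def)
  then have "v \<in> Q0"
    using locally_gentle_arrow_ends[OF assms(1)] \<open>t b = v\<close> by blast
  show "locally_gentle (levee_Q0 Q0 v) Q1 (levee_h h v a) (levee_t t v b) (levee_Z Z t v)"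
  proof (rule locally_gentle_refinement[OF assms(1), where \<pi> = "levee_proj v"])
    show "\<forall>x\<in>Q1. levee_h h v a x \<in> levee_Q0 Q0 v \<and> levee_t t v b x \<in> levee_Q0 Q0 v"
      using locally_gentle_arrow_ends[OF assms(1)]
      by (simp add: levee_h_in_levee_Q0 levee_t_in_levee_Q0)
    show "levee_proj v ` levee_Q0 Q0 v \<subseteq> Q0"
      using \<open>v \<in> Q0\<close> by (rule levee_proj_levee_Q0)
    show "levee_Z Z t v = {(m, n) \<in> Z. levee_t t v b m = levee_h h v a n}"
      using assms(1,3-5) by (rule levee_Z_eq_surviving_paths)
  qed simp_all
  show "\<not> relational (levee_Q0 Q0 v) Q1 (levee_h h v a) (levee_t t v b) (levee_Z Z t v) Sharp"
    by (rule levee_new_vertex_not_relational) auto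
  show "\<not> relational (levee_Q0 Q0 v) Q1 (levee_h h v a) (levee_t t v b) (levee_Z Z t v) Flat"
    by (rule levee_new_vertex_not_relational) auto
qed

end
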